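(* Let $C$ be a conformal algebra and $t(b_1,\dots,b_n)$ a non-associative monomial obtained from $b_1\cdots b_n$ by some bracketing. Then for all $a_1,\dots,a_n\in C$ and all integers $k_1,\dots,k_{n-1}$ and $x_n\in\Bbbk[t,t^{-1}]$, $$t\big(a_1(t^{k_1}),\dots,a_{n-1}(t^{k_{n-1}}),a_n(x_n)\big)=\sum_{s_1,\dots,s_{n-1}\ge0}\prod_{i=1}^{n-1}\binom{k_i}{s_i}\;P^{t^{s_1}\otimes\cdots\otimes t^{s_{n-1}}}_{\,t^{\sum_i(k_i-s_i)}x_n}\big(t^*(a_1,\dots,a_n)\big),$$ where only finitely many terms of the sum are nonzero. (In the paper's notation: $t(\bar a(\bar x))=P^{x_{1(2)}\otimes\cdots\otimes x_{n-1(2)}}_{x_{1(1)}\cdots x_{n-1(1)}x_n}t^*(\bar a)$, using the extended coproduct $\Delta(t^k)=\sum_{s\ge0}\binom ks t^{k-s}\otimes t^s$, $k\in\mathbb Z$.)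
   Context: $\Bbbk$ is a field of characteristic $0$, $H=\Bbbk[D]$ with Hopf structure $\Delta(D)=D\otimes1+1\otimes D$, $\varepsilon(D)=0$, $S(D)=-D$; iterated coproduct $\Delta^{(1)}=\mathrm{id}$, $\Delta^{(k+1)}=(\mathrm{id}\otimes\Delta^{(k)})\Delta$; $H$ acts on $H^{\otimes n}$ from the right by $(f_1\otimes\cdots\otimes f_n)h=f_1h_{(1)}\otimes\cdots\otimes f_nh_{(n)}$ and $H^{\otimes n}\otimes_H M$ is taken w.r.t. this action. A conformal algebra is a unital left $H$-module $C$ with bilinear operations $a_{(n)}b$ ($n\ge0$) such that $a_{(n)}b=0$ for $n\gg0$, $(Da)_{(n)}b=-na_{(n-1)}b$, $a_{(n)}(Db)=D(a_{(n)}b)+na_{(n-1)}b$. Pseudoproduct $a*b=\sum_{s\ge0}\frac{(-D)^s}{s!}\otimes1\otimes_H(a_{(s)}b)$; expanded pseudoproduct: if $a*b=\sum_i f_i\otimes g_i\otimes_H c_i$ then $(F\otimes_H a)*(G\otimes_H b)=\sum_iF\Delta^{(n)}(f_i)\otimes G\Delta^{(m)}(g_i)\otimes_H c_i$. For a bracketing $t$, $t^*(a_1,\dots,a_n)\in H^{\otimes n}\otimes_HC$ is obtained by replacing each product by the expanded pseudoproduct, with $a_i$ regarded as $1\otimes_H a_i$. Coefficient algebra: $\operatorname{Coeff}C=\Bbbk[t,t^{-1}]\otimes_HC$ ($\Bbbk[t,t^{-1}]$ a right $H$-module via $t^nD=-nt^{n-1}$), $a(x):=x\otimes_Ha$, with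 product $a(t^n)b(t^m)=\sum_{s\ge0}\binom ns(a_{(s)}b)(t^{n+m-s})$; $t(\dots)$ on the left is evaluated in $\operatorname{Coeff}C$. Pairing $\langle t^k,D^m\rangle=k!\,\delta_{k,m}$ between $\Bbbk[t]$ and $H$; antipode $S(t)=-t$ on $\Bbbk[t]$. Let $\theta:H^{\otimes n}\otimes_HC\to H^{\otimes(n-1)}\otimes C$ be the isomorphism $(h_1\otimes\cdots\otimes h_{n-1}\otimes1)\otimes_Hc\mapsto h_1\otimes\cdots\otimes h_{n-1}\otimes c$. For $x_i\in\Bbbk[t]$, $P^{x_1\otimes\cdots\otimes x_{n-1}}=(\langle S(x_1),\cdot\rangle\otimes\cdots\otimes\langle S(x_{n-1}),\cdot\rangle\otimes\mathrm{id}_C)\theta:H^{\otimes n}\otimes_HC\to C$, and $P^{\bar x}_y(A):=y\otimes_HP^{\bar x}(A)\in\operatorname{Coeff}C$ for $y\in\Bbbk[t,t^{-1}]$. *)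

theory Defs
  imports Complex_Main "HOL-Library.Function_Algebras"
begin

text \<open>A conformal algebra: a k-vector space C (scalar multiplication sc) with a k-linear
operator D (this is exactly a unital left H-module, H = k[D]), bilinear n-products
pr n a b = a_(n) b, locality and the two sesquilinearity axioms.\<close>

definition conformal_algebra ::
  "('k::field_char_0 \<Rightarrow> 'c::ab_group_add \<Rightarrow> 'c) \<Rightarrow> ('c \<Rightarrow> 'c) \<Rightarrow> (nat \<Rightarrow> 'c \<Rightarrow> 'c \<Rightarrow> 'c) \<Rightarrow> bool" where
  "conformal_algebra sc D pr \<longleftrightarrow>
     vector_space sc \<and> Vector_Spaces.linear sc sc D \<and>
     (\<forall>n a. Vector_Spaces.linear sc sc (pr n a)) \<and>
     (\<forall>n b. Vector_Spaces.linear sc sc (\<lambda>a. pr n a b)) \<and>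
     (\<forall>a b. \<exists>N. \<forall>n\<ge>N. pr n a b = 0) \<and>
     (\<forall>n a b. pr n (D a) b = - sc (of_nat n) (pr (n - 1) a b)) \<and>
     (\<forall>n a b. pr n a (D b) = D (pr n a b) + sc (of_nat n) (pr (n - 1) a b))"

definition loc_bound :: "(nat \<Rightarrow> 'c \<Rightarrow> 'c \<Rightarrow> 'c::zero) \<Rightarrow> 'c \<Rightarrow> 'c \<Rightarrow> nat" where
  "loc_bound pr a b = (LEAST N. \<forall>n\<ge>N. pr n a b = 0)"

datatype bmon = BLeaf | BNode bmon bmon

fun leaves :: "bmon \<Rightarrow> nat" where
  "leaves BLeaf = 1"
| "leaves (BNode l r) = leaves l + leaves r"

text \<open>An element of H^{\<otimes>n} \<otimes>_H C is represented by a list of terms (e, c) with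
length e = n, standing for  D^{e_1} \<otimes> ... \<otimes> D^{e_n} \<otimes>_H c  (scalars absorbed in c).\<close>

text \<open>Pseudoproduct a*b = sum_s (-D)^s/s! \<otimes> 1 \<otimes>_H a_(s) b, as triples (i,j,c)
meaning D^i \<otimes> D^j \<otimes>_H c.\<close>
definition pseudo :: "('k::field_char_0 \<Rightarrow> 'c::ab_group_add \<Rightarrow> 'c) \<Rightarrow> (nat \<Rightarrow> 'c \<Rightarrow> 'c \<Rightarrow> 'c)
    \<Rightarrow> 'c \<Rightarrow> 'c \<Rightarrow> (nat \<times> nat \<times> 'c) list" where
  "pseudo sc pr a b = map (\<lambda>s. (s, 0, sc ((-1)^s / fact s) (pr s a b))) [0..<loc_bound pr a b]"

text \<open>Iterated coproduct on D^s: Delta^(1) = id, Delta^(k+1) = (id \<otimes> Delta^(k)) Delta,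
with Delta(D^s) = sum_j (s choose j) D^j \<otimes> D^(s-j).  Result: list of (coefficient, exponents).
(Delta^(0) is never used.)\<close>
fun delta :: "nat \<Rightarrow> nat \<Rightarrow> ('k::field_char_0 \<times> nat list) list" where
  "delta 0 s = []"
| "delta (Suc 0) s = [(1, [s])]"
| "delta (Suc (Suc k)) s =
     concat (map (\<lambda>j. map (\<lambda>(c, l). (of_nat (s choose j) * c, j # l)) (delta (Suc k) (s - j)))
                 [0..<Suc s])"

definition ep :: "('k::field_char_0 \<Rightarrow> 'c::ab_group_add \<Rightarrow> 'c) \<Rightarrow> (nat \<Rightarrow> 'c \<Rightarrow> 'c \<Rightarrow> 'c)
    \<Rightarrow> (nat list \<times> 'c) list \<Rightarrow> (nat list \<times> 'c) list \<Rightarrow> (nat list \<times> 'c) list" where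
  "ep sc pr A B =
     concat (map (\<lambda>(e, x). concat (map (\<lambda>(e', y). concat (map (\<lambda>(i, j, c).
        concat (map (\<lambda>(c1, l1). map (\<lambda>(c2, l2).
            (map2 (+) e l1 @ map2 (+) e' l2, sc (c1 * c2) c))
          (delta (length e') j)) (delta (length e) i)))
       (pseudo sc pr x y))) B)) A)"

text \<open>t^*(a_1,...,a_n), each a_i regarded as 1 \<otimes>_H a_i.\<close>
fun tstar :: "('k::field_char_0 \<Rightarrow> 'c::ab_group_add \<Rightarrow> 'c) \<Rightarrow> (nat \<Rightarrow> 'c \<Rightarrow> 'c \<Rightarrow> 'c)
    \<Rightarrow> bmon \<Rightarrow> 'c list \<Rightarrow> (nat list \<times> 'c) list" where
  "tstar sc pr BLeaf as = [([0], hd as)]"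
| "tstar sc pr (BNode l r) as =
     ep sc pr (tstar sc pr l (take (leaves l) as)) (tstar sc pr r (drop (leaves l) as))"

text \<open>theta on a single term D^e \<otimes> D^r \<otimes>_H c, computed via the defining relation
(X \<otimes> D^(r+1)) \<otimes>_H c = (X \<otimes> D^r) \<otimes>_H Dc - sum_i (X D_i \<otimes> D^r) \<otimes>_H c;
on terms with r = 0 it is  (h \<otimes> 1) \<otimes>_H c \<mapsto> h \<otimes> c.  Output: terms (e', c) meaning
D^{e'_1} \<otimes> ... \<otimes> D^{e'_{n-1}} \<otimes> c in H^{\<otimes>(n-1)} \<otimes> C.\<close>
fun theta_term :: "('c::ab_group_add \<Rightarrow> 'c) \<Rightarrow> nat list \<Rightarrow> nat \<Rightarrow> 'c \<Rightarrow> (nat list \<times> 'c) list" where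
  "theta_term D e 0 c = [(e, c)]"
| "theta_term D e (Suc r) c =
     theta_term D e r (D c) @ concat (map (\<lambda>i. theta_term D (e[i := e ! i + 1]) r (- c)) [0..<length e])"

definition theta :: "('c::ab_group_add \<Rightarrow> 'c) \<Rightarrow> (nat list \<times> 'c) list \<Rightarrow> (nat list \<times> 'c) list" where
  "theta D A = concat (map (\<lambda>(e, c). theta_term D (butlast e) (last e) c) A)"

text \<open>Pairing <t^k, D^m> = k! delta_{k,m}.\<close>
definition pairing :: "nat \<Rightarrow> nat \<Rightarrow> 'k::field_char_0" where
  "pairing k m = (if k = m then fact k else 0)"

text \<open>P^{t^{s_1} \<otimes> ... \<otimes> t^{s_{n-1}}}, using S(t^s) = (-t)^s = (-1)^s t^s.\<close>
definition Pmon :: "('k::field_char_0 \<Rightarrow> 'c::ab_group_add \<Rightarrow> 'c) \<Rightarrow> ('c \<Rightarrow> 'c) \<Rightarrow> nat list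
    \<Rightarrow> (nat list \<times> 'c) list \<Rightarrow> 'c" where
  "Pmon sc D ss A =
     sum_list (map (\<lambda>(e, c). sc (\<Prod>i<length ss. (-1) ^ (ss ! i) * pairing (ss ! i) (e ! i)) c) (theta D A))"

text \<open>Elements of k[t,t^{-1}] \<otimes> C are represented by lists of (j, c) meaning t^j \<otimes> c;
Laurent polynomials by lists of (coefficient, exponent).\<close>

definition coeff_of :: "('k \<Rightarrow> 'c \<Rightarrow> 'c) \<Rightarrow> ('k \<times> int) list \<Rightarrow> 'c \<Rightarrow> (int \<times> 'c) list" where
  "coeff_of sc x a = map (\<lambda>(c, j). (j, sc c a)) x"   (* a(x) = x \<otimes>_H a *)

definition laurent_shift :: "int \<Rightarrow> ('k \<times> int) list \<Rightarrow> ('k \<times> int) list" where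
  "laurent_shift m x = map (\<lambda>(c, j). (c, j + m)) x"

definition coeff_scale :: "('k \<Rightarrow> 'c \<Rightarrow> 'c) \<Rightarrow> 'k \<Rightarrow> (int \<times> 'c) list \<Rightarrow> (int \<times> 'c) list" where
  "coeff_scale sc r X = map (\<lambda>(j, c). (j, sc r c)) X"

text \<open>P^{xbar}_y(A) = y \<otimes>_H P^{xbar}(A).\<close>
definition Py :: "('k::field_char_0 \<Rightarrow> 'c::ab_group_add \<Rightarrow> 'c) \<Rightarrow> ('c \<Rightarrow> 'c) \<Rightarrow> ('k \<times> int) list
    \<Rightarrow> nat list \<Rightarrow> (nat list \<times> 'c) list \<Rightarrow> (int \<times> 'c) list" where
  "Py sc D y ss A = coeff_of sc y (Pmon sc D ss A)"

text \<open>Product a(t^n) b(t^m) = sum_s (n choose s) (a_(s) b)(t^(n+m-s)), extended bilinearly.\<close>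
definition cmul :: "('k::field_char_0 \<Rightarrow> 'c::ab_group_add \<Rightarrow> 'c) \<Rightarrow> (nat \<Rightarrow> 'c \<Rightarrow> 'c \<Rightarrow> 'c)
    \<Rightarrow> (int \<times> 'c) list \<Rightarrow> (int \<times> 'c) list \<Rightarrow> (int \<times> 'c) list" where
  "cmul sc pr X Y =
     concat (map (\<lambda>(k, a). concat (map (\<lambda>(l, b).
        map (\<lambda>s. (k + l - int s, sc ((of_int k :: 'k) gchoose s) (pr s a b))) [0..<loc_bound pr a b]) Y)) X)"

fun evalC :: "('k::field_char_0 \<Rightarrow> 'c::ab_group_add \<Rightarrow> 'c) \<Rightarrow> (nat \<Rightarrow> 'c \<Rightarrow> 'c \<Rightarrow> 'c)
    \<Rightarrow> bmon \<Rightarrow> (int \<times> 'c) list list \<Rightarrow> (int \<times> 'c) list" where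
  "evalC sc pr BLeaf xs = hd xs"
| "evalC sc pr (BNode l r) xs =
     cmul sc pr (evalC sc pr l (take (leaves l) xs)) (evalC sc pr r (drop (leaves l) xs))"

text \<open>Equality in Coeff C: k[t,t^{-1}] \<otimes> C is identified with finitely supported
functions int \<Rightarrow> C; \<otimes>_H is the quotient by the k-span of the elements
t^j \<otimes> Dc - (t^j D) \<otimes> c = t^j \<otimes> Dc + j t^(j-1) \<otimes> c.\<close>
definition coeff_fun :: "(int \<times> 'c::comm_monoid_add) list \<Rightarrow> int \<Rightarrow> 'c" where
  "coeff_fun X = (\<lambda>j. sum_list (map snd (filter (\<lambda>p. fst p = j) X)))"

definition coeff_rel :: "('k::field_char_0 \<Rightarrow> 'c::ab_group_add \<Rightarrow> 'c) \<Rightarrow> ('c \<Rightarrow> 'c) \<Rightarrow> (int \<Rightarrow> 'c) set" where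
  "coeff_rel sc D = {f. \<exists>k c. f = (\<lambda>j. (if j = k then D c else 0) + (if j = k - 1 then sc (of_int k) c else 0))}"

definition coeff_eq :: "('k::field_char_0 \<Rightarrow> 'c::ab_group_add \<Rightarrow> 'c) \<Rightarrow> ('c \<Rightarrow> 'c)
    \<Rightarrow> (int \<times> 'c) list \<Rightarrow> (int \<times> 'c) list \<Rightarrow> bool" where
  "coeff_eq sc D X Y \<longleftrightarrow>
     (\<lambda>j. coeff_fun X j - coeff_fun Y j) \<in> module.span (\<lambda>r f j. sc r (f j)) (coeff_rel sc D)"

end

theory Submission
  imports Defs
begin

text \<open>
  In the right H-module k[t,t^-1] we have t^k D^e = (-k)^(e) t^(k-e),
  with the rising factorial (-k)^(e) = pochhammer (-k) e. Hence the assignment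
  h_1 (x) ... (x) h_(n-1) (x) 1 (x)_H c  |->  (t^k_1 h_1) ... (t^k_(n-1) h_(n-1)) x_n (x)_H c
  is an explicit evaluation map psi from H^(x)n (x)_H C to Coeff C, and the theorem splits in two.

  First, t(a_1(t^k_1), ..., a_n(x_n)) = psi(t^*(a_1, ..., a_n)), by induction on the bracketing. In a
  product of two subterms the left factor has degree P = k + sum (k_i - e_i), and D^s enters it through
  the iterated coproduct; the Vandermonde identity for rising factorials collapses the sum over the
  coproduct to (-P)^(s), so the term (-D)^s / s! of the pseudoproduct contributes
  (-1)^s / s! (-P)^(s) = (P choose s), the coefficient of the product in Coeff C.

  Second, psi(A) is the sum over s of prod_i (k_i choose s_i) P^(t^s)_(t^(sum (k_i - s_i)) x_n)(A):
  the pairing with S(t^s_i) picks out s = e, and (k choose e) (-1)^e e! = (-k)^(e).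

  All terms of t^* have last tensor factor 1, where theta is trivial, so both identities already hold
  in k[t,t^-1] (x) C, before passing to the quotient Coeff C.
\<close>

definition single :: "int \<Rightarrow> 'c::zero \<Rightarrow> int \<Rightarrow> 'c" where
  "single k a = (\<lambda>j. if j = k then a else 0)"

lemma single_add: "single k (a + b) = single k a + (single k b :: int \<Rightarrow> 'c::monoid_add)"
  by (auto simp: single_def fun_eq_iff)

lemma single_zero [simp]: "single k 0 = 0"
  by (auto simp: single_def fun_eq_iff)

lemma single_sum_list: "single k (\<Sum>x\<leftarrow>xs. f x) = (\<Sum>x\<leftarrow>xs. single k (f x))"
  by (induction xs) (simp_all add: single_add)

lemma coeff_fun_Nil [simp]: "coeff_fun [] = 0"
  by (simp add: coeff_fun_def fun_eq_iff)

lemma coeff_fun_Cons [simp]: "coeff_fun (p # X) = single (fst p) (snd p) + coeff_fun X"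
  by (auto simp: coeff_fun_def single_def fun_eq_iff)

lemma coeff_fun_append [simp]: "coeff_fun (X @ Y) = coeff_fun X + coeff_fun Y"
  by (induction X) (simp_all add: add.assoc)

lemma coeff_fun_concat: "coeff_fun (concat Xs) = (\<Sum>X\<leftarrow>Xs. coeff_fun X)"
  by (induction Xs) simp_all

lemma coeff_fun_map: "coeff_fun (map f xs) = (\<Sum>x\<leftarrow>xs. single (fst (f x)) (snd (f x)))"
  by (induction xs) simp_all

lemma sum_list_swap:
  "(\<Sum>x\<leftarrow>xs. \<Sum>y\<leftarrow>ys. f x y) = (\<Sum>y\<leftarrow>ys. \<Sum>x\<leftarrow>xs. (f x y :: 'a::comm_monoid_add))"
  by (induction xs) (simp_all add: sum_list_addf)

lemma sum_list_concat: "sum_list (concat xss) = (\<Sum>xs\<leftarrow>xss. sum_list xs :: 'a::monoid_add)"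
  by (induction xss) simp_all

lemma sum_list_by_coeff_fun:
  fixes h :: "int \<Rightarrow> 'c::ab_group_add \<Rightarrow> 'd::comm_monoid_add"
  assumes add: "\<And>k a b. h k (a + b) = h k a + h k b" and zero: "\<And>k. h k 0 = 0"
    and "finite S" "fst ` set X \<subseteq> S"
  shows "(\<Sum>p\<leftarrow>X. h (fst p) (snd p)) = (\<Sum>k\<in>S. h k (coeff_fun X k))"
  using assms(4)
proof (induction X)
  case Nil
  then show ?case by (simp add: zero)
next
  case (Cons p X)
  have "(\<Sum>k\<in>S. h k (single (fst p) (snd p) k)) = h (fst p) (snd p)"
    using Cons.prems \<open>finite S\<close> by (simp add: single_def zero if_distrib cong: if_cong)
  then show ?case
    using Cons by (simp add: add sum.distrib)
qed

lemma sum_list_remdups_delta: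
  "(\<Sum>y\<leftarrow>remdups (map f xs). \<Sum>x\<leftarrow>xs. if y = f x then g x else 0) =
    (\<Sum>x\<leftarrow>xs. (g x :: 'a::comm_monoid_add))"
proof -
  have "(\<Sum>y\<leftarrow>remdups (map f xs). if y = f x then g x else 0) = g x" if "x \<in> set xs" for x
    using that by (simp add: sum_list_distinct_conv_sum_set if_distrib cong: if_cong)
  then show ?thesis
    by (subst sum_list_swap) (simp cong: map_cong)
qed

lemma sum_list_upt_eq_if_vanishing:
  assumes "\<And>s. N \<le> s \<Longrightarrow> f s = (0::'a::comm_monoid_add)" "N \<le> M"
  shows "(\<Sum>s\<leftarrow>[0..<M]. f s) = (\<Sum>s\<leftarrow>[0..<N]. f s)"
proof -
  have "(\<Sum>s\<leftarrow>[0..<M]. f s) = (\<Sum>s\<leftarrow>[0..<N]. f s) + (\<Sum>s\<leftarrow>[N..<M]. f s)"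
    using assms(2) upt_add_eq_append[of 0 N "M - N"] by simp
  also have "(\<Sum>s\<leftarrow>[N..<M]. f s) = 0"
    using assms(1) by (simp add: sum_list_distinct_conv_sum_set)
  finally show ?thesis by simp
qed

locale conformal_alg =
  fixes sc :: "'k::field_char_0 \<Rightarrow> 'c::ab_group_add \<Rightarrow> 'c"
    and D :: "'c \<Rightarrow> 'c"
    and pr :: "nat \<Rightarrow> 'c \<Rightarrow> 'c \<Rightarrow> 'c"
  assumes conformal_algebra: "conformal_algebra sc D pr"
begin

sublocale vector_space sc
  using conformal_algebra unfolding conformal_algebra_def by auto

lemma pr_add_right: "pr n a (b + b') = pr n a b + pr n a b'"
  and pr_scale_right: "pr n a (sc r b) = sc r (pr n a b)"
  and pr_add_left: "pr n (a + a') b = pr n a b + pr n a' b"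
  and pr_scale_left: "pr n (sc r a) b = sc r (pr n a b)"
  using conformal_algebra unfolding conformal_algebra_def Vector_Spaces.linear_iff by auto

lemma pr_zero_right [simp]: "pr n a 0 = 0"
  using pr_scale_right[of n a 0 0] by simp

lemma pr_zero_left [simp]: "pr n 0 b = 0"
  using pr_scale_left[of n 0 0 b] by simp

lemma pr_beyond_loc_bound: "loc_bound pr a b \<le> n \<Longrightarrow> pr n a b = 0"
proof -
  obtain N where "\<forall>n\<ge>N. pr n a b = 0"
    using conformal_algebra unfolding conformal_algebra_def by blast
  then have "\<forall>n\<ge>loc_bound pr a b. pr n a b = 0"
    unfolding loc_bound_def by (rule LeastI)
  then show "loc_bound pr a b \<le> n \<Longrightarrow> pr n a b = 0" by blast
qed

lemma scale_sum_list: "sc r (\<Sum>x\<leftarrow>xs. f x) = (\<Sum>x\<leftarrow>xs. sc r (f x))"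
  by (induction xs) (simp_all add: scale_right_distrib)

lemma sum_list_scale: "(\<Sum>x\<leftarrow>xs. sc (f x) v) = sc (\<Sum>x\<leftarrow>xs. f x) v"
  by (induction xs) (simp_all add: scale_left_distrib)

lemma coeff_fun_cmul:
  "coeff_fun (cmul sc pr X Y) = (\<Sum>p\<leftarrow>X. \<Sum>q\<leftarrow>Y. coeff_fun (cmul sc pr [p] [q]))"
  unfolding cmul_def by (simp add: coeff_fun_concat split_def comp_def)

lemma coeff_fun_cmul_single:
  assumes "\<And>s. M \<le> s \<Longrightarrow> pr s a b = 0"
  shows "coeff_fun (cmul sc pr [(k, a)] [(l, b)]) =
    (\<Sum>s\<leftarrow>[0..<M]. single (k + l - int s) (sc (of_int k gchoose s) (pr s a b)))"
proof -
  define L where "L = loc_bound pr a b"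
  define f where "f s = single (k + l - int s) (sc (of_int k gchoose s) (pr s a b))" for s
  have "(\<Sum>s\<leftarrow>[0..<L + M]. f s) = (\<Sum>s\<leftarrow>[0..<L]. f s)"
    by (rule sum_list_upt_eq_if_vanishing) (simp_all add: f_def L_def pr_beyond_loc_bound)
  moreover have "(\<Sum>s\<leftarrow>[0..<L + M]. f s) = (\<Sum>s\<leftarrow>[0..<M]. f s)"
    by (rule sum_list_upt_eq_if_vanishing) (simp_all add: f_def assms)
  ultimately show ?thesis
    unfolding cmul_def by (simp add: coeff_fun_map f_def L_def comp_def)
qed

lemma coeff_fun_cmul_single_add_left:
  "coeff_fun (cmul sc pr [(k, a + a')] [(l, b)]) =
     coeff_fun (cmul sc pr [(k, a)] [(l, b)]) + coeff_fun (cmul sc pr [(k, a')] [(l, b)])"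
proof -
  define M where "M = loc_bound pr a b + loc_bound pr a' b"
  have "pr s a b = 0" "pr s a' b = 0" if "M \<le> s" for s
    using that by (simp_all add: M_def pr_beyond_loc_bound)
  then show ?thesis
    by (simp add: coeff_fun_cmul_single[where M = M] pr_add_left scale_right_distrib
        single_add sum_list_addf)
qed

lemma coeff_fun_cmul_single_add_right:
  "coeff_fun (cmul sc pr [(k, a)] [(l, b + b')]) =
     coeff_fun (cmul sc pr [(k, a)] [(l, b)]) + coeff_fun (cmul sc pr [(k, a)] [(l, b')])"
proof -
  define M where "M = loc_bound pr a b + loc_bound pr a b'"
  have "pr s a b = 0" "pr s a b' = 0" if "M \<le> s" for s
    using that by (simp_all add: M_def pr_beyond_loc_bound)
  then show ?thesis
    by (simp add: coeff_fun_cmul_single[where M = M] pr_add_right scale_right_distrib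
        single_add sum_list_addf)
qed

lemma coeff_fun_cmul_single_zero_left: "coeff_fun (cmul sc pr [(k, 0)] [(l, b)]) = 0"
  and coeff_fun_cmul_single_zero_right: "coeff_fun (cmul sc pr [(k, a)] [(l, 0)]) = 0"
  using coeff_fun_cmul_single[of 0 0 b k l] coeff_fun_cmul_single[of 0 a 0 k l] by simp_all

lemma coeff_fun_cmul_grouped:
  assumes "finite S" "fst ` set X \<subseteq> S" "finite T" "fst ` set Y \<subseteq> T"
  shows "coeff_fun (cmul sc pr X Y) =
    (\<Sum>k\<in>S. \<Sum>l\<in>T. coeff_fun (cmul sc pr [(k, coeff_fun X k)] [(l, coeff_fun Y l)]))"
proof -
  have inner: "(\<Sum>q\<leftarrow>Y. coeff_fun (cmul sc pr [(k, a)] [(fst q, snd q)])) =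
      (\<Sum>l\<in>T. coeff_fun (cmul sc pr [(k, a)] [(l, coeff_fun Y l)]))" for k a
    by (rule sum_list_by_coeff_fun[where h = "\<lambda>l b. coeff_fun (cmul sc pr [(k, a)] [(l, b)])",
          OF _ _ assms(3,4)])
       (simp_all add: coeff_fun_cmul_single_add_right coeff_fun_cmul_single_zero_right)
  have "coeff_fun (cmul sc pr X Y) =
      (\<Sum>p\<leftarrow>X. \<Sum>q\<leftarrow>Y. coeff_fun (cmul sc pr [(fst p, snd p)] [(fst q, snd q)]))"
    by (subst coeff_fun_cmul) simp
  also have "\<dots> =
      (\<Sum>p\<leftarrow>X. \<Sum>l\<in>T. coeff_fun (cmul sc pr [(fst p, snd p)] [(l, coeff_fun Y l)]))"
    by (simp only: inner)
  also have "\<dots> = (\<Sum>k\<in>S. \<Sum>l\<in>T. coeff_fun (cmul sc pr [(k, coeff_fun X k)] [(l, coeff_fun Y l)]))"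
    by (rule sum_list_by_coeff_fun[where
          h = "\<lambda>k a. \<Sum>l\<in>T. coeff_fun (cmul sc pr [(k, a)] [(l, coeff_fun Y l)])", OF _ _ assms(1,2)])
       (simp_all add: coeff_fun_cmul_single_add_left coeff_fun_cmul_single_zero_left sum.distrib)
  finally show ?thesis .
qed

lemma coeff_fun_cmul_cong:
  assumes "coeff_fun X = coeff_fun X'" "coeff_fun Y = coeff_fun Y'"
  shows "coeff_fun (cmul sc pr X Y) = coeff_fun (cmul sc pr X' Y')"
proof -
  define S where "S = fst ` set X \<union> fst ` set X'"
  define T where "T = fst ` set Y \<union> fst ` set Y'"
  show ?thesis
    using coeff_fun_cmul_grouped[of S X T Y] coeff_fun_cmul_grouped[of S X' T Y'] assms
    by (simp add: S_def T_def)
qed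

end

lemma delta_length_sum:
  "m \<ge> 1 \<Longrightarrow> p \<in> set (delta m s :: ('k::field_char_0 \<times> nat list) list) \<Longrightarrow>
    length (snd p) = m \<and> sum_list (snd p) = s"
  by (induction m s arbitrary: p rule: delta.induct) fastforce+

lemma delta_zero:
  "m \<ge> 1 \<Longrightarrow> (delta m 0 :: ('k::field_char_0 \<times> nat list) list) = [(1, replicate m 0)]"
  by (induction m "0::nat" rule: delta.induct) simp_all

lemma sum_delta_pochhammer:
  fixes as :: "'k::field_char_0 list"
  assumes "length as = m" "m \<ge> 1"
  shows "(\<Sum>p\<leftarrow>delta m s. fst p * (\<Prod>(a, l)\<leftarrow>zip as (snd p). pochhammer a l)) =
    pochhammer (sum_list as) s"
  using assms
proof (induction m s arbitrary: as rule: delta.induct)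
  case (2 s)
  then obtain a where "as = [a]" by (auto simp: length_Suc_conv)
  then show ?case by simp
next
  case (3 k s)
  then obtain a as' where as: "as = a # as'" "length as' = Suc k" by (auto simp: length_Suc_conv)
  have "(\<Sum>p\<leftarrow>delta (Suc (Suc k)) s. fst p * (\<Prod>(a, l)\<leftarrow>zip as (snd p). pochhammer a l)) =
      (\<Sum>j\<leftarrow>[0..<Suc s]. \<Sum>p\<leftarrow>delta (Suc k) (s - j).
         of_nat (s choose j) * pochhammer a j * (fst p * (\<Prod>(a, l)\<leftarrow>zip as' (snd p). pochhammer a l)))"
    by (simp add: as sum_list_concat map_concat comp_def split_def mult_ac del: upt_Suc)
  also have "\<dots> = (\<Sum>j\<leftarrow>[0..<Suc s]. of_nat (s choose j) * pochhammer a j *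
         (\<Sum>p\<leftarrow>delta (Suc k) (s - j). fst p * (\<Prod>(a, l)\<leftarrow>zip as' (snd p). pochhammer a l)))"
    by (simp only: sum_list_const_mult)
  also have "\<dots> = (\<Sum>j\<leftarrow>[0..<Suc s]. of_nat (s choose j) * pochhammer a j * pochhammer (sum_list as') (s - j))"
    by (intro arg_cong[where f = sum_list] map_cong refl) (simp add: "3.IH" as(2) del: upt_Suc)
  also have "\<dots> = pochhammer (sum_list as) s"
    by (simp add: as pochhammer_binomial_sum sum_list_distinct_conv_sum_set atLeast0AtMost
        atLeastLessThanSuc_atLeastAtMost del: upt_Suc)
  finally show ?case .
qed auto

text \<open>(t^k_1 D^e_1) ... (t^k_m D^e_m) = act_coeff ks es * t^(act_exp ks es) in k[t,t^-1].\<close>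

definition act_exp :: "int list \<Rightarrow> nat list \<Rightarrow> int" where
  "act_exp ks es = (\<Sum>(k, e)\<leftarrow>zip ks es. k - int e)"

definition act_coeff :: "int list \<Rightarrow> nat list \<Rightarrow> 'k::field_char_0" where
  "act_coeff ks es = (\<Prod>(k, e)\<leftarrow>zip ks es. pochhammer (- of_int k) e)"

lemma act_exp_append:
  "length ks = length es \<Longrightarrow> act_exp (ks @ ks') (es @ es') = act_exp ks es + act_exp ks' es'"
  by (simp add: act_exp_def zip_append)

lemma act_coeff_append:
  "length ks = length es \<Longrightarrow> act_coeff (ks @ ks') (es @ es') = act_coeff ks es * act_coeff ks' es'"
  by (simp add: act_coeff_def zip_append)

lemma act_exp_snoc [simp]:
  "length ks = length es \<Longrightarrow> act_exp (ks @ [k]) (es @ [e]) = act_exp ks es + k - int e"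
  by (simp add: act_exp_def zip_append)

lemma act_coeff_snoc [simp]:
  "length ks = length es \<Longrightarrow> act_coeff (ks @ [k]) (es @ [e]) = act_coeff ks es * pochhammer (- of_int k) e"
  by (simp add: act_coeff_def zip_append)

lemma act_exp_add:
  "length ks = length es \<Longrightarrow> length es = length ls \<Longrightarrow>
    act_exp ks (map2 (+) es ls) = act_exp ks es - int (sum_list ls)"
  by (induction ks es ls rule: list_induct3) (simp_all add: act_exp_def)

lemma act_coeff_add:
  "length ks = length es \<Longrightarrow> length es = length ls \<Longrightarrow>
    act_coeff ks (map2 (+) es ls) =
      act_coeff ks es * (\<Prod>(a, l)\<leftarrow>zip (map2 (\<lambda>k e. of_nat e - of_int k) ks es) ls. pochhammer a l)"
  by (induction ks es ls rule: list_induct3) (simp_all add: act_coeff_def pochhammer_product')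

lemma sum_delta_act_coeff:
  assumes "length ks = length es" "ks \<noteq> []"
  shows "(\<Sum>p\<leftarrow>delta (length ks) s. fst p * act_coeff ks (map2 (+) es (snd p))) =
    (act_coeff ks es :: 'k::field_char_0) * pochhammer (- of_int (act_exp ks es)) s"
proof -
  define as :: "'k list" where "as = map2 (\<lambda>k e. of_nat e - of_int k) ks es"
  have m: "length ks \<ge> 1" using assms(2) by (simp add: Suc_le_eq)
  have "(\<Sum>p\<leftarrow>delta (length ks) s. fst p * act_coeff ks (map2 (+) es (snd p))) =
      (\<Sum>p\<leftarrow>delta (length ks) s. act_coeff ks es * (fst p * (\<Prod>(a, l)\<leftarrow>zip as (snd p). pochhammer a l)))"
  proof (intro arg_cong[where f = sum_list] map_cong refl)
    fix p assume "p \<in> set (delta (length ks) s :: ('k \<times> nat list) list)"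
    then have "length (snd p) = length es"
      using delta_length_sum[OF m, of p s] assms(1) by simp
    then show "fst p * act_coeff ks (map2 (+) es (snd p)) =
        act_coeff ks es * (fst p * (\<Prod>(a, l)\<leftarrow>zip as (snd p). pochhammer a l))"
      using assms(1) by (simp add: act_coeff_add as_def)
  qed
  also have "\<dots> = act_coeff ks es * pochhammer (sum_list as) s"
    using assms(1) m by (simp add: sum_list_const_mult sum_delta_pochhammer as_def)
  also have "sum_list as = - of_int (act_exp ks es)"
    using assms(1) unfolding as_def by (induction ks es rule: list_induct2) (simp_all add: act_exp_def)
  finally show ?thesis .
qed

lemma act_exp_append_right: "length ks = length es \<Longrightarrow> act_exp ks (es @ es') = act_exp ks es"
  by (simp add: act_exp_def zip_append2)

lemma act_coeff_append_right: "length ks = length es \<Longrightarrow> act_coeff ks (es @ es') = act_coeff ks es"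
  by (simp add: act_coeff_def zip_append2)

lemma act_exp_ep_term:
  assumes "length e = length kl" "length l = Suc (length kl)"
  shows "act_exp (kl @ k # kr) (map2 (+) (e @ [0]) l @ e') =
    k + act_exp kl e + act_exp kr e' - int (sum_list l)"
  using act_exp_append[of "kl @ [k]" "map2 (+) (e @ [0]) l" kr e'] act_exp_add[of "kl @ [k]" "e @ [0]" l] assms
  by simp

lemma act_coeff_ep_term:
  assumes "length e = length kl" "length l = Suc (length kl)"
  shows "act_coeff (kl @ k # kr) (map2 (+) (e @ [0]) l @ e') =
    act_coeff (kl @ [k]) (map2 (+) (e @ [0]) l) * act_coeff kr e'"
  using act_coeff_append[of "kl @ [k]" "map2 (+) (e @ [0]) l" kr e'] assms by simp

text \<open>The map psi on representatives D^e_1 (x) ... (x) D^e_n (x)_H c; the zip drops e_n, which is 0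
  on every term of t^*.\<close>

definition tensor_eval :: "('k::field_char_0 \<Rightarrow> 'c::ab_group_add \<Rightarrow> 'c) \<Rightarrow> int list \<Rightarrow> ('k \<times> int) list
    \<Rightarrow> (nat list \<times> 'c) list \<Rightarrow> (int \<times> 'c) list" where
  "tensor_eval sc ks x A =
     concat (map (\<lambda>(e, c). map (\<lambda>(g, j). (j + act_exp ks e, sc (g * act_coeff ks e) c)) x) A)"

lemma tensor_eval_concat: "tensor_eval sc ks x (concat As) = concat (map (tensor_eval sc ks x) As)"
  by (induction As) (simp_all add: tensor_eval_def)

lemma tensor_eval_eq_concat_single:
  "tensor_eval sc ks x A = concat (map (\<lambda>p. tensor_eval sc ks x [p]) A)"
  using tensor_eval_concat[of sc ks x "map (\<lambda>p. [p]) A"] by (simp add: comp_def)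

lemma coeff_fun_tensor_eval:
  "coeff_fun (tensor_eval sc ks x A) =
    (\<Sum>p\<leftarrow>A. \<Sum>q\<leftarrow>x. single (snd q + act_exp ks (fst p)) (sc (fst q * act_coeff ks (fst p)) (snd p)))"
  by (simp add: tensor_eval_def coeff_fun_concat coeff_fun_map split_def comp_def)

lemma ep_concat: "ep sc pr A B = concat (map (\<lambda>a. concat (map (\<lambda>b. ep sc pr [a] [b]) B)) A)"
  unfolding ep_def by (simp add: split_def)

lemma ep_single:
  assumes "e' \<noteq> []"
  shows "ep sc pr [(e, a)] [(e', b)] =
    concat (map (\<lambda>s. map (\<lambda>p. (map2 (+) e (snd p) @ e', sc (fst p) (sc ((-1) ^ s / fact s) (pr s a b))))
      (delta (length e) s)) [0..<loc_bound pr a b])"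
  using assms unfolding ep_def pseudo_def
  by (simp add: delta_zero Suc_le_eq zip_replicate2 comp_def split_def)

lemma fst_mem_ep_single:
  fixes sc :: "'k::field_char_0 \<Rightarrow> 'c::ab_group_add \<Rightarrow> 'c"
  assumes "e \<noteq> []" "e' \<noteq> []" "p \<in> set (ep sc pr [(e, a)] [(e', b)])"
  obtains l where "length l = length e" "fst p = map2 (+) e l @ e'"
  using assms delta_length_sum[of "length e" _ _, where 'k = 'k]
  by (fastforce simp: ep_single Suc_le_eq)

lemma leaves_pos: "0 < leaves t"
  by (induction t) auto

lemma tstar_shape:
  "p \<in> set (tstar sc pr t as) \<Longrightarrow> length (fst p) = leaves t \<and> last (fst p) = 0"
proof (induction t arbitrary: as p)
  case BLeaf
  then show ?case by simp
next
  case (BNode l r)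
  from BNode.prems obtain a b where
    a: "a \<in> set (tstar sc pr l (take (leaves l) as))" and
    b: "b \<in> set (tstar sc pr r (drop (leaves l) as))" and
    p: "p \<in> set (ep sc pr [(fst a, snd a)] [(fst b, snd b)])"
    by (subst (asm) tstar.simps, subst (asm) ep_concat) auto
  have "fst a \<noteq> []" "fst b \<noteq> []"
    using BNode.IH(1)[OF a] BNode.IH(2)[OF b] leaves_pos[of l] leaves_pos[of r] by auto
  then obtain v where "length v = length (fst a)" "fst p = map2 (+) (fst a) v @ fst b"
    using p by (rule fst_mem_ep_single)
  then show ?case
    using BNode.IH(1)[OF a] BNode.IH(2)[OF b] \<open>fst b \<noteq> []\<close> by simp
qed

definition coeff_args :: "('k \<Rightarrow> 'c \<Rightarrow> 'c) \<Rightarrow> int list \<Rightarrow> 'c list \<Rightarrow> ('k \<times> int) list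
    \<Rightarrow> (int \<times> 'c) list list" where
  "coeff_args sc ks as x = map2 (\<lambda>k a. [(k, a)]) ks (butlast as) @ [coeff_of sc x (last as)]"

context conformal_alg
begin

lemma coeff_fun_tensor_eval_ep_single_eq_sum:
  fixes k :: int
  assumes "length e = length kl" "length e' = Suc (length kr)"
  defines "P \<equiv> k + act_exp kl e" and "Q \<equiv> act_exp kr e'"
  shows "coeff_fun (tensor_eval sc (kl @ k # kr) x (ep sc pr [(e @ [0], a)] [(e', b)])) =
    (\<Sum>s\<leftarrow>[0..<loc_bound pr a b]. \<Sum>q\<leftarrow>x. single (P + (snd q + Q) - int s)
       (sc (fst q * act_coeff kr e' * ((-1) ^ s / fact s) * (act_coeff kl e * pochhammer (- of_int P) s))
         (pr s a b)))"
proof -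
  define E where "E l = map2 (+) (e @ [0]) l" for l
  define c :: "nat \<Rightarrow> 'k" where "c s = (-1) ^ s / fact s" for s
  have "e' \<noteq> []" using assms(2) by auto
  have shift: "act_exp (kl @ k # kr) (E l @ e') = P + Q - int s"
    and weight: "act_coeff (kl @ k # kr) (E l @ e') = act_coeff (kl @ [k]) (E l) * act_coeff kr e'"
    if "(g, l) \<in> set (delta (Suc (length kl)) s :: ('k \<times> nat list) list)" for g l s
    using delta_length_sum[OF _ that] act_exp_ep_term[OF assms(1), of l k kr e']
      act_coeff_ep_term[OF assms(1), of l k kr e']
    by (simp_all add: E_def P_def Q_def)
  have delta_sum: "(\<Sum>p\<leftarrow>delta (Suc (length kl)) s. fst p * act_coeff (kl @ [k]) (E (snd p))) =
      act_coeff kl e * pochhammer (- of_int P) s" for s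
    using sum_delta_act_coeff[of "kl @ [k]" "e @ [0]" s] assms(1)
    by (simp add: E_def P_def add.commute)
  have "coeff_fun (tensor_eval sc (kl @ k # kr) x (ep sc pr [(e @ [0], a)] [(e', b)])) =
      (\<Sum>s\<leftarrow>[0..<loc_bound pr a b]. \<Sum>p\<leftarrow>delta (Suc (length kl)) s. \<Sum>q\<leftarrow>x.
         single (snd q + act_exp (kl @ k # kr) (E (snd p) @ e'))
           (sc (fst q * act_coeff (kl @ k # kr) (E (snd p) @ e')) (sc (fst p) (sc (c s) (pr s a b)))))"
    by (simp add: ep_single[OF \<open>e' \<noteq> []\<close>] coeff_fun_tensor_eval sum_list_concat map_concat comp_def
        assms(1) E_def c_def)
  also have "\<dots> = (\<Sum>s\<leftarrow>[0..<loc_bound pr a b]. \<Sum>q\<leftarrow>x. \<Sum>p\<leftarrow>delta (Suc (length kl)) s.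
         single (P + (snd q + Q) - int s)
           (sc (fst q * act_coeff kr e' * c s * (fst p * act_coeff (kl @ [k]) (E (snd p)))) (pr s a b)))"
    by (subst sum_list_swap, intro arg_cong[where f = sum_list] map_cong refl)
       (auto simp: shift weight mult_ac algebra_simps)
  also have "\<dots> = (\<Sum>s\<leftarrow>[0..<loc_bound pr a b]. \<Sum>q\<leftarrow>x. single (P + (snd q + Q) - int s)
       (sc (fst q * act_coeff kr e' * c s * (act_coeff kl e * pochhammer (- of_int P) s)) (pr s a b)))"
    by (simp add: single_sum_list[symmetric] sum_list_scale sum_list_const_mult delta_sum)
  finally show ?thesis
    by (simp only: c_def)
qed

lemma coeff_fun_tensor_eval_ep_single:
  assumes "length e = length kl" "length e' = Suc (length kr)"
  shows "coeff_fun (tensor_eval sc (kl @ k # kr) x (ep sc pr [(e @ [0], a)] [(e', b)])) =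
    coeff_fun (cmul sc pr (tensor_eval sc kl [(1, k)] [(e @ [0], a)]) (tensor_eval sc kr x [(e', b)]))"
proof -
  define P where "P = k + act_exp kl e"
  define \<alpha> :: 'k where "\<alpha> = act_coeff kl e"
  define Q where "Q = act_exp kr e'"
  define \<beta> :: 'k where "\<beta> = act_coeff kr e'"
  define L where "L = loc_bound pr a b"
  have vanish: "pr s (sc \<alpha> a) (sc \<gamma> b) = 0" if "L \<le> s" for s \<gamma>
    using that by (simp add: L_def pr_scale_left pr_scale_right pr_beyond_loc_bound)
  have "coeff_fun (tensor_eval sc (kl @ k # kr) x (ep sc pr [(e @ [0], a)] [(e', b)])) =
      (\<Sum>q\<leftarrow>x. \<Sum>s\<leftarrow>[0..<L].
         single (P + (snd q + Q) - int s) (sc (of_int P gchoose s) (pr s (sc \<alpha> a) (sc (fst q * \<beta>) b))))"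
    unfolding coeff_fun_tensor_eval_ep_single_eq_sum[OF assms] P_def[symmetric] Q_def[symmetric]
      \<alpha>_def[symmetric] \<beta>_def[symmetric] L_def[symmetric]
    by (subst sum_list_swap) (simp add: gbinomial_pochhammer pr_scale_left pr_scale_right mult_ac)
  also have "\<dots> = coeff_fun (cmul sc pr [(P, sc \<alpha> a)] (map (\<lambda>q. (snd q + Q, sc (fst q * \<beta>) b)) x))"
    using coeff_fun_cmul_single[where M = L, OF vanish]
    by (subst coeff_fun_cmul) (simp add: comp_def)
  also have "\<dots> =
      coeff_fun (cmul sc pr (tensor_eval sc kl [(1, k)] [(e @ [0], a)]) (tensor_eval sc kr x [(e', b)]))"
    using assms(1)
    by (simp add: tensor_eval_def act_exp_append_right act_coeff_append_right split_def P_def \<alpha>_def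
        Q_def \<beta>_def add.commute)
  finally show ?thesis .
qed

lemma coeff_fun_cmul_concat:
  "coeff_fun (cmul sc pr (concat Xs) (concat Ys)) = (\<Sum>X\<leftarrow>Xs. \<Sum>Y\<leftarrow>Ys. coeff_fun (cmul sc pr X Y))"
proof -
  have "coeff_fun (cmul sc pr (concat Xs) (concat Ys)) =
      (\<Sum>X\<leftarrow>Xs. \<Sum>p\<leftarrow>X. \<Sum>Y\<leftarrow>Ys. \<Sum>q\<leftarrow>Y. coeff_fun (cmul sc pr [p] [q]))"
    by (subst coeff_fun_cmul) (simp add: sum_list_concat map_concat comp_def)
  also have "\<dots> = (\<Sum>X\<leftarrow>Xs. \<Sum>Y\<leftarrow>Ys. \<Sum>p\<leftarrow>X. \<Sum>q\<leftarrow>Y. coeff_fun (cmul sc pr [p] [q]))"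
    by (simp only: sum_list_swap[of _ _ Ys])
  finally show ?thesis
    by (subst (2) coeff_fun_cmul) simp
qed

lemma coeff_fun_tensor_eval_ep:
  assumes "\<forall>p\<in>set A. length (fst p) = Suc (length kl) \<and> last (fst p) = 0"
    and "\<forall>p\<in>set B. length (fst p) = Suc (length kr)"
  shows "coeff_fun (tensor_eval sc (kl @ k # kr) x (ep sc pr A B)) =
    coeff_fun (cmul sc pr (tensor_eval sc kl [(1, k)] A) (tensor_eval sc kr x B))"
proof -
  have single: "coeff_fun (tensor_eval sc (kl @ k # kr) x (ep sc pr [p] [q])) =
      coeff_fun (cmul sc pr (tensor_eval sc kl [(1, k)] [p]) (tensor_eval sc kr x [q]))"
    if "p \<in> set A" "q \<in> set B" for p q
  proof -
    have "fst p \<noteq> []" "last (fst p) = 0" "length (fst p) = Suc (length kl)"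
      using assms(1) that(1) by auto
    then have "p = (butlast (fst p) @ [0], snd p)"
      by (metis append_butlast_last_id prod.collapse)
    moreover have "q = (fst q, snd q)" "length (fst q) = Suc (length kr)"
      using assms(2) that(2) by auto
    ultimately show ?thesis
      using coeff_fun_tensor_eval_ep_single[of "butlast (fst p)" kl "fst q" kr k x "snd p" "snd q"]
        \<open>length (fst p) = _\<close> by simp
  qed
  have "coeff_fun (tensor_eval sc (kl @ k # kr) x (ep sc pr A B)) =
      (\<Sum>p\<leftarrow>A. \<Sum>q\<leftarrow>B. coeff_fun (tensor_eval sc (kl @ k # kr) x (ep sc pr [p] [q])))"
    by (subst ep_concat) (simp add: tensor_eval_concat coeff_fun_concat comp_def)
  also have "\<dots> = (\<Sum>p\<leftarrow>A. \<Sum>q\<leftarrow>B.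
      coeff_fun (cmul sc pr (tensor_eval sc kl [(1, k)] [p]) (tensor_eval sc kr x [q])))"
    using single by (simp cong: map_cong)
  also have "\<dots> = coeff_fun (cmul sc pr (tensor_eval sc kl [(1, k)] A) (tensor_eval sc kr x B))"
    by (simp only: tensor_eval_eq_concat_single[of sc kl "[(1, k)]" A]
        tensor_eval_eq_concat_single[of sc kr x B] coeff_fun_cmul_concat map_map comp_def)
  finally show ?thesis .
qed

lemma coeff_eqI: "coeff_fun X = coeff_fun Y \<Longrightarrow> coeff_eq sc D X Y"
proof -
  interpret fun_module: module "\<lambda>r (f :: int \<Rightarrow> 'c) j. sc r (f j)"
    by unfold_locales (simp_all add: fun_eq_iff scale_right_distrib scale_left_distrib)
  show "coeff_fun X = coeff_fun Y \<Longrightarrow> coeff_eq sc D X Y"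
    unfolding coeff_eq_def using fun_module.span_zero by (simp add: zero_fun_def)
qed

lemma coeff_args_append:
  assumes "length al = Suc (length kl)" "length ar = Suc (length kr)"
  shows "coeff_args sc (kl @ k # kr) (al @ ar) x = coeff_args sc kl al [(1, k)] @ coeff_args sc kr ar x"
proof -
  obtain al' a where al: "al = al' @ [a]"
    using assms(1) by (cases al rule: rev_exhaust) auto
  have "ar \<noteq> []"
    using assms(2) by auto
  then show ?thesis
    using assms(1) by (simp add: al coeff_args_def coeff_of_def butlast_append zip_append)
qed

lemma coeff_fun_evalC_coeff_args:
  "length as = leaves t \<Longrightarrow> length ks = leaves t - 1 \<Longrightarrow>
    coeff_fun (evalC sc pr t (coeff_args sc ks as x)) = coeff_fun (tensor_eval sc ks x (tstar sc pr t as))"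
proof (induction t arbitrary: as ks x)
  case BLeaf
  then obtain a where "as = [a]" "ks = []"
    by (auto simp: length_Suc_conv)
  then show ?case
    by (simp add: coeff_args_def coeff_of_def tensor_eval_def act_exp_def act_coeff_def split_def)
next
  case (BNode l r)
  define kl where "kl = take (leaves l - 1) ks"
  define k where "k = ks ! (leaves l - 1)"
  define kr where "kr = drop (leaves l) ks"
  define al where "al = take (leaves l) as"
  define ar where "ar = drop (leaves l) as"
  have l: "0 < leaves l" and r: "0 < leaves r"
    by (simp_all add: leaves_pos)
  have ks: "ks = kl @ k # kr"
    using BNode.prems l r id_take_nth_drop[of "leaves l - 1" ks] by (simp add: kl_def k_def kr_def)
  have lengths: "length al = leaves l" "length ar = leaves r" "length kl = leaves l - 1"
    "length kr = leaves r - 1"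
    using BNode.prems l r by (simp_all add: al_def ar_def kl_def kr_def)
  have args: "coeff_args sc ks as x = coeff_args sc kl al [(1, k)] @ coeff_args sc kr ar x"
    using coeff_args_append[of al kl ar kr k x] lengths l r
    by (simp add: ks al_def ar_def)
  have "length (coeff_args sc kl al [(1, k)]) = leaves l"
    using lengths l by (simp add: coeff_args_def)
  then have "coeff_fun (evalC sc pr (BNode l r) (coeff_args sc ks as x)) =
      coeff_fun (cmul sc pr (evalC sc pr l (coeff_args sc kl al [(1, k)])) (evalC sc pr r (coeff_args sc kr ar x)))"
    by (simp add: args)
  also have "\<dots> = coeff_fun (cmul sc pr (tensor_eval sc kl [(1, k)] (tstar sc pr l al))
      (tensor_eval sc kr x (tstar sc pr r ar)))"
    using BNode.IH lengths by (intro coeff_fun_cmul_cong) simp_all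
  also have "\<dots> = coeff_fun (tensor_eval sc ks x (tstar sc pr (BNode l r) as))"
    using tstar_shape[of _ sc pr l al] tstar_shape[of _ sc pr r ar] lengths l r
    by (simp add: ks al_def ar_def coeff_fun_tensor_eval_ep)
  finally show ?case .
qed

end

lemma theta_last_zero:
  "\<forall>p\<in>set A. last (fst p) = 0 \<Longrightarrow> theta D A = map (\<lambda>p. (butlast (fst p), snd p)) A"
  unfolding theta_def by (induction A) (auto simp: split_def)

lemma prod_pairing:
  assumes "length ss = length e"
  shows "(\<Prod>i<length ss. (-1) ^ (ss ! i) * pairing (ss ! i) (e ! i) :: 'k::field_char_0) =
    (if ss = e then \<Prod>i<length e. (-1) ^ (e ! i) * fact (e ! i) else 0)"
proof (cases "ss = e")
  case False
  then obtain i where "i < length ss" "ss ! i \<noteq> e ! i"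
    using assms nth_equalityI by blast
  then show ?thesis
    using False by (auto simp: pairing_def intro: prod_zero)
qed (simp add: pairing_def)

lemma act_exp_conv_sum:
  "length ks \<le> length es \<Longrightarrow> act_exp ks es = (\<Sum>i<length ks. ks ! i - int (es ! i))"
  by (simp add: act_exp_def sum.list_conv_set_nth atLeast0LessThan min_def)

lemma act_coeff_conv_prod:
  "length ks \<le> length es \<Longrightarrow> act_coeff ks es = (\<Prod>i<length ks. pochhammer (- of_int (ks ! i)) (es ! i))"
  by (simp add: act_coeff_def prod.list_conv_set_nth atLeast0LessThan min_def)

lemma pochhammer_minus_conv_gbinomial:
  "pochhammer (- a) k = (a gchoose k) * ((-1) ^ k * fact k :: 'k::field_char_0)"
  by (simp add: gbinomial_pochhammer field_simps)

lemma gbinomial_prod_pairing: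
  assumes "length ss = length ks" "length e = Suc (length ks)"
  shows "(\<Prod>i<length ks. (of_int (ks ! i) :: 'k::field_char_0) gchoose (ss ! i)) *
      (\<Prod>i<length ss. (-1) ^ (ss ! i) * pairing (ss ! i) (butlast e ! i)) =
    (if ss = butlast e then act_coeff ks e else 0)"
  using assms prod_pairing[of ss "butlast e", where 'k = 'k]
  by (simp add: act_coeff_conv_prod nth_butlast pochhammer_minus_conv_gbinomial prod.distrib)

lemma Pmon_last_zero:
  "\<forall>p\<in>set A. last (fst p) = 0 \<Longrightarrow>
    Pmon sc D ss A =
      (\<Sum>p\<leftarrow>A. sc (\<Prod>i<length ss. (-1) ^ (ss ! i) * pairing (ss ! i) (butlast (fst p) ! i)) (snd p))"
  by (simp add: Pmon_def theta_last_zero comp_def split_def)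

definition P_term :: "('k::field_char_0 \<Rightarrow> 'c::ab_group_add \<Rightarrow> 'c) \<Rightarrow> ('c \<Rightarrow> 'c) \<Rightarrow> int list
    \<Rightarrow> ('k \<times> int) list \<Rightarrow> (nat list \<times> 'c) list \<Rightarrow> nat list \<Rightarrow> (int \<times> 'c) list" where
  "P_term sc D ks x A ss = coeff_scale sc (\<Prod>i<length ks. of_int (ks ! i) gchoose (ss ! i))
     (Py sc D (laurent_shift (\<Sum>i<length ks. ks ! i - int (ss ! i)) x) ss A)"

context conformal_alg
begin

lemma coeff_fun_P_term:
  assumes shape: "\<forall>p\<in>set A. length (fst p) = Suc (length ks) \<and> last (fst p) = 0"
    and "length ss = length ks"
  shows "coeff_fun (P_term sc D ks x A ss) =
    (\<Sum>p\<leftarrow>A. if ss = butlast (fst p) then coeff_fun (tensor_eval sc ks x [p]) else 0)"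
proof -
  define C :: 'k where "C = (\<Prod>i<length ks. of_int (ks ! i) gchoose (ss ! i))"
  define S where "S = (\<Sum>i<length ks. ks ! i - int (ss ! i))"
  define w :: "nat list \<times> 'c \<Rightarrow> 'k"
    where "w p = (\<Prod>i<length ss. (-1) ^ (ss ! i) * pairing (ss ! i) (butlast (fst p) ! i))" for p
  have "coeff_fun (P_term sc D ks x A ss) =
      (\<Sum>p\<leftarrow>A. \<Sum>q\<leftarrow>x. single (snd q + S) (sc (fst q * (C * w p)) (snd p)))"
    using shape unfolding P_term_def C_def[symmetric] S_def[symmetric]
    by (subst sum_list_swap)
       (simp add: Pmon_last_zero coeff_scale_def Py_def coeff_of_def laurent_shift_def coeff_fun_map
         split_def comp_def scale_sum_list single_sum_list w_def mult_ac)
  also have "\<dots> = (\<Sum>p\<leftarrow>A. if ss = butlast (fst p) then coeff_fun (tensor_eval sc ks x [p]) else 0)"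
  proof (intro arg_cong[where f = sum_list] map_cong refl)
    fix p assume "p \<in> set A"
    then have len: "length (fst p) = Suc (length ks)"
      using shape by auto
    have Cw: "C * w p = (if ss = butlast (fst p) then act_coeff ks (fst p) else 0)"
      unfolding C_def w_def using assms(2) len by (rule gbinomial_prod_pairing)
    show "(\<Sum>q\<leftarrow>x. single (snd q + S) (sc (fst q * (C * w p)) (snd p))) =
        (if ss = butlast (fst p) then coeff_fun (tensor_eval sc ks x [p]) else 0)"
    proof (cases "ss = butlast (fst p)")
      case True
      then have "S = act_exp ks (fst p)"
        using len by (simp add: S_def act_exp_conv_sum nth_butlast)
      then show ?thesis
        using True by (simp add: Cw coeff_fun_tensor_eval)
    qed (simp add: Cw)
  qed
  finally show ?thesis .
qed

lemma coeff_fun_tensor_eval_eq_P_terms: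
  assumes shape: "\<forall>p\<in>set A. length (fst p) = Suc (length ks) \<and> last (fst p) = 0"
  shows "coeff_fun (tensor_eval sc ks x A) =
    coeff_fun (concat (map (P_term sc D ks x A) (remdups (map (\<lambda>p. butlast (fst p)) A))))"
proof -
  have "coeff_fun (tensor_eval sc ks x A) = (\<Sum>p\<leftarrow>A. coeff_fun (tensor_eval sc ks x [p]))"
    by (subst tensor_eval_eq_concat_single) (simp add: coeff_fun_concat comp_def)
  also have "\<dots> = (\<Sum>ss\<leftarrow>remdups (map (\<lambda>p. butlast (fst p)) A).
      \<Sum>p\<leftarrow>A. if ss = butlast (fst p) then coeff_fun (tensor_eval sc ks x [p]) else 0)"
    by (rule sum_list_remdups_delta[symmetric])
  also have "\<dots> = coeff_fun (concat (map (P_term sc D ks x A) (remdups (map (\<lambda>p. butlast (fst p)) A))))"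
    unfolding coeff_fun_concat map_map comp_def
  proof (intro arg_cong[where f = sum_list] map_cong refl)
    fix ss assume "ss \<in> set (remdups (map (\<lambda>p. butlast (fst p)) A))"
    then have "length ss = length ks"
      using shape by auto
    then show "(\<Sum>p\<leftarrow>A. if ss = butlast (fst p) then coeff_fun (tensor_eval sc ks x [p]) else 0) =
        coeff_fun (P_term sc D ks x A ss)"
      using shape by (simp add: coeff_fun_P_term)
  qed
  finally show ?thesis .
qed

lemma coeff_fun_P_term_eq_0:
  assumes "\<forall>p\<in>set A. length (fst p) = Suc (length ks) \<and> last (fst p) = 0"
    and "length ss = length ks" "ss \<notin> (\<lambda>p. butlast (fst p)) ` set A"
  shows "coeff_fun (P_term sc D ks x A ss) = 0"
proof -
  have "ss \<noteq> butlast (fst p)" if "p \<in> set A" for p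
    using assms(3) that by auto
  then show ?thesis
    using assms(1,2) by (simp add: coeff_fun_P_term cong: map_cong)
qed

end

theorem lemma3p1:
  fixes sc :: "'k::field_char_0 \<Rightarrow> 'c::ab_group_add \<Rightarrow> 'c"
    and D :: "'c \<Rightarrow> 'c"
    and pr :: "nat \<Rightarrow> 'c \<Rightarrow> 'c \<Rightarrow> 'c"
    and t :: bmon
    and as :: "'c list"
    and ks :: "int list"
    and xn :: "('k \<times> int) list"
  assumes "conformal_algebra sc D pr"
    and "length as = leaves t"
    and "length ks = leaves t - 1"
  shows "let n = leaves t;
             lhs = evalC sc pr t (map2 (\<lambda>k a. [(k, a)]) ks (butlast as) @ [coeff_of sc xn (last as)]);
             term = (\<lambda>ss. coeff_scale sc (\<Prod>i<n - 1. (of_int (ks ! i) :: 'k) gchoose (ss ! i))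
                       (Py sc D (laurent_shift (\<Sum>i<n - 1. ks ! i - int (ss ! i)) xn) ss (tstar sc pr t as)))
         in \<exists>SS. distinct SS \<and> (\<forall>ss\<in>set SS. length ss = n - 1) \<and>
                 (\<forall>ss. length ss = n - 1 \<and> ss \<notin> set SS \<longrightarrow> coeff_eq sc D (term ss) []) \<and>
                 coeff_eq sc D lhs (concat (map term SS))"
proof -
  interpret conformal_alg sc D pr by (rule conformal_alg.intro) (fact assms(1))
  define A where "A = tstar sc pr t as"
  define SS where "SS = remdups (map (\<lambda>p. butlast (fst p)) A)"
  have shape: "\<forall>p\<in>set A. length (fst p) = Suc (length ks) \<and> last (fst p) = 0"
    using tstar_shape[of _ sc pr t as] assms(3) leaves_pos[of t] by (auto simp: A_def)
  show ?thesis
    unfolding Let_def assms(3)[symmetric] A_def[symmetric] P_term_def[symmetric] coeff_args_def[symmetric]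
  proof (intro exI[of _ SS] conjI allI impI)
    show "distinct SS" "\<forall>ss\<in>set SS. length ss = length ks"
      using shape by (auto simp: SS_def)
  next
    fix ss assume "length ss = length ks \<and> ss \<notin> set SS"
    then show "coeff_eq sc D (P_term sc D ks xn A ss) []"
      using shape by (intro coeff_eqI) (simp add: coeff_fun_P_term_eq_0 SS_def)
  next
    have "coeff_fun (evalC sc pr t (coeff_args sc ks as xn)) = coeff_fun (tensor_eval sc ks xn A)"
      unfolding A_def using assms(2,3) by (rule coeff_fun_evalC_coeff_args)
    then show "coeff_eq sc D (evalC sc pr t (coeff_args sc ks as xn)) (concat (map (P_term sc D ks xn A) SS))"
      unfolding SS_def using shape by (intro coeff_eqI) (simp add: coeff_fun_tensor_eval_eq_P_terms)
  qed
qed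

end
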